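(* Let $(M_n)_{n\in\mathbb{N}}$ be a discrete-time martingale such that $\sup_{i\geq 1}\mathbb{E}[|M_i-M_{i-1}|]<+\infty$. Let $(\tau_k)_{k\geq 1}$ be an increasing sequence of positive random times, independent of $M$, and set $A_t:=\sum_{k=1}^{+\infty}1_{\{\tau_k\leq t\}}$. Assume $\mathbb{E}[A_t]<+\infty$ for every $t\geq 0$. Then the process $$Z_t:=M_0+\sum_{k=1}^{+\infty}(M_k-M_{k-1})1_{\{\tau_k\leq t\}}=M_{A_t}$$ is a step martingale with respect to its natural filtration, i.e. a martingale whose sample paths are step functions on every bounded interval.
   Context: A step martingale is a martingale whose paths have finitely many jumps on any bounded interval and are constant between them. *)

theory Defs
  imports "HOL-Probability.Probability"
begin

definition natural_filtration ::
  "'a measure \<Rightarrow> 't::linorder set \<Rightarrow> ('t \<Rightarrow> 'a \<Rightarrow> real) \<Rightarrow> 't \<Rightarrow> 'a measure" where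
  "natural_filtration P T X t =
     sigma (space P) {X s -` B \<inter> space P | s B. s \<in> T \<and> s \<le> t \<and> B \<in> sets borel}"

definition martingale_on ::
  "'a measure \<Rightarrow> ('t::linorder \<Rightarrow> 'a measure) \<Rightarrow> 't set \<Rightarrow> ('t \<Rightarrow> 'a \<Rightarrow> real) \<Rightarrow> bool" where
  "martingale_on P F T X \<longleftrightarrow>
     (\<forall>t\<in>T. subalgebra P (F t)) \<and>
     (\<forall>s\<in>T. \<forall>t\<in>T. s \<le> t \<longrightarrow> sets (F s) \<subseteq> sets (F t)) \<and>
     (\<forall>t\<in>T. X t \<in> borel_measurable (F t) \<and> integrable P (X t)) \<and>
     (\<forall>s\<in>T. \<forall>t\<in>T. s \<le> t \<longrightarrow>
        (AE \<omega> in P. real_cond_exp P (F s) (X t) \<omega> = X s \<omega>))"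

definition step_on :: "(real \<Rightarrow> 'b) \<Rightarrow> real set \<Rightarrow> bool" where
  "step_on f S \<longleftrightarrow> (\<exists>J. finite J \<and>
     (\<forall>x y. x \<in> S \<longrightarrow> y \<in> S \<longrightarrow> x \<le> y \<longrightarrow> {x..y} \<inter> J = {} \<longrightarrow> f x = f y))"

definition step_martingale :: "'a measure \<Rightarrow> (real \<Rightarrow> 'a \<Rightarrow> real) \<Rightarrow> bool" where
  "step_martingale P Z \<longleftrightarrow>
     martingale_on P (natural_filtration P {0..} Z) {0..} Z \<and>
     (AE \<omega> in P. \<forall>b\<ge>0. step_on (\<lambda>t. Z t \<omega>) {0..b})"

end

theory Submission
  imports Defs
begin

text \<open>Write \<open>\<Delta>\<^sub>k = M\<^sub>k\<^sub>+\<^sub>1 - M\<^sub>k\<close>. Because the jump times are independent of \<open>M\<close> and \<open>M\<close>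
  is a martingale, \<open>\<Delta>\<^sub>k\<close> is orthogonal to every event of \<open>\<sigma>(\<tau>, M\<^sub>0, \<dots>, M\<^sub>k)\<close>. Before
  \<open>\<tau>\<^sub>k\<^sub>+\<^sub>1\<close> the process \<open>Z\<close> is a function of \<open>\<tau>\<close> and \<open>M\<^sub>0, \<dots>, M\<^sub>k\<close> only, so for an event
  \<open>B\<close> observed by \<open>Z\<close> up to time \<open>s \<le> t\<close> the set \<open>B \<inter> {s < \<tau>\<^sub>k\<^sub>+\<^sub>1 \<le> t}\<close> is such an event.
  Hence \<open>E[1\<^sub>B (Z\<^sub>t - Z\<^sub>s)] = \<Sum>\<^sub>k E[1\<^bsub>B \<inter> {s < \<tau>\<^sub>k\<^sub>+\<^sub>1 \<le> t}\<^esub> \<Delta>\<^sub>k] = 0\<close>; exchanging sum and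
  expectation is justified by \<open>E|\<Delta>\<^sub>k| \<le> C\<close>, independence, and
  \<open>\<Sum>\<^sub>k P(\<tau>\<^sub>k \<le> t) = E[A\<^sub>t] < \<infinity>\<close>. The latter also makes \<open>A\<^sub>t\<close> finite almost surely, so
  the paths are step functions.\<close>

lemma (in sigma_finite_subalgebra) set_integral_eq_if_real_cond_exp_eq:
  assumes "integrable M f" "integrable M g"
    and "AE x in M. real_cond_exp M F f x = g x" and "A \<in> sets F"
  shows "(LINT x:A|M. f x) = (LINT x:A|M. g x)"
proof -
  have [measurable]: "A \<in> sets M" using assms(4) subalg by (auto simp: subalgebra_def)
  have "(LINT x:A|M. f x) = (LINT x:A|M. real_cond_exp M F f x)"
    by (rule real_cond_exp_intA[OF assms(1,4)])
  also have "\<dots> = (LINT x:A|M. g x)"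
    using assms(2,3) by (intro set_lebesgue_integral_cong_AE) (auto elim: AE_mp)
  finally show ?thesis .
qed

lemma (in finite_measure) sigma_finite_subalgebraI:
  assumes "subalgebra M F"
  shows "sigma_finite_subalgebra M F"
  using assms finite_measure_axioms
  by (intro finite_measure_subalgebra_is_sigma_finite)
    (simp add: finite_measure_subalgebra_def finite_measure_subalgebra_axioms_def)

lemma set_integral_eq_0_sigma_sets:
  fixes f :: "'a \<Rightarrow> real"
  assumes "Int_stable G" "G \<subseteq> sets M" "integrable M f" "(\<integral>x. f x \<partial>M) = 0"
    and "\<And>A. A \<in> G \<Longrightarrow> (LINT x:A|M. f x) = 0"
    and "A \<in> sigma_sets (space M) G"
  shows "(LINT x:A|M. f x) = 0"
proof -
  have G_space: "G \<subseteq> Pow (space M)" using assms(2) sets.sets_into_space by blast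
  have sigma_G: "sigma_sets (space M) G \<subseteq> sets M" using assms(2) by (rule sets.sigma_sets_subset)
  have integrable_on: "set_integrable M B f" if "B \<in> sets M" for B
    using integrable_mult_indicator[OF that assms(3)] by (simp add: set_integrable_def)
  from assms(1) G_space assms(6) show ?thesis
  proof (induction rule: sigma_sets_induct_disjoint)
    case (basic A)
    then show ?case by (rule assms(5))
  next
    case empty
    then show ?case by (simp add: set_lebesgue_integral_def)
  next
    case (compl A)
    have A: "A \<in> sets M" using compl.hyps sigma_G by blast
    have "(LINT x:(space M - A)|M. f x) = (LINT x:space M|M. f x) - (LINT x:A|M. f x)"
      using set_integral_Un[of "space M - A" A M f] A
      by (simp add: integrable_on Un_absorb2 sets.sets_into_space Diff_disjoint Int_commute)
    then show ?case using compl.IH assms(3,4) by (simp add: set_integral_space)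
  next
    case (union A)
    have "\<And>i. A i \<in> sets M" using union.hyps(2) sigma_G by blast
    moreover have "A i \<inter> A j = {}" if "i \<noteq> j" for i j
      using union.hyps(1) that by (auto simp: disjoint_family_on_def)
    ultimately have "(LINT x:(\<Union>i. A i)|M. f x) = (\<Sum>i. LINT x:A i|M. f x)"
      by (intro lebesgue_integral_countable_add integrable_on) auto
    then show ?case using union.IH by simp
  qed
qed

lemma sigma_sets_Int_in_sets:
  assumes "S \<in> sets N" "S \<subseteq> \<Omega>"
    and "\<And>A. A \<in> G \<Longrightarrow> A \<inter> S \<in> sets N"
    and "B \<in> sigma_sets \<Omega> G"
  shows "B \<inter> S \<in> sets N"
  using assms(4)
proof (induction rule: sigma_sets.induct)
  case (Compl A)
  have "(\<Omega> - A) \<inter> S = S - A \<inter> S" using assms(2) by blast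
  then show ?case using Compl.IH assms(1) by auto
next
  case (Union A)
  have "(\<Union>i. A i) \<inter> S = (\<Union>i. A i \<inter> S)" by blast
  then show ?case using Union.IH sets.countable_UN[of "\<lambda>i. A i \<inter> S" UNIV N] by auto
qed (use assms(3) in auto)

lemma (in prob_space) integral_indicator_mult_indep:
  assumes "indep_var N1 X N2 Y" "X \<in> measurable M N1" "A \<in> sets N1"
    and "g \<in> borel_measurable N2" "integrable M (\<lambda>\<omega>. g (Y \<omega>))"
  shows "(\<integral>\<omega>. indicator A (X \<omega>) * g (Y \<omega>) \<partial>M) = prob (X -` A \<inter> space M) * (\<integral>\<omega>. g (Y \<omega>) \<partial>M)"
proof -
  have XA: "X -` A \<inter> space M \<in> events" using measurable_sets[OF assms(2,3)] .
  have indicator_eq: "\<And>\<omega>. \<omega> \<in> space M \<Longrightarrow> indicator A (X \<omega>) = indicator (X -` A \<inter> space M) \<omega>"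
    by (simp split: split_indicator)
  have "indep_var borel (indicator A \<circ> X) borel (g \<circ> Y)"
    using assms(1,3,4) by (intro indep_var_compose) auto
  moreover have "integrable M (\<lambda>\<omega>. indicator A (X \<omega>) :: real)"
    using XA by (subst Bochner_Integration.integrable_cong[OF refl indicator_eq])
      (auto intro!: integrable_real_indicator simp: less_top[symmetric] emeasure_finite)
  ultimately have "(\<integral>\<omega>. indicator A (X \<omega>) * g (Y \<omega>) \<partial>M)
      = (\<integral>\<omega>. indicator A (X \<omega>) \<partial>M) * (\<integral>\<omega>. g (Y \<omega>) \<partial>M)"
    using assms(5) by (intro indep_var_lebesgue_integral[unfolded comp_def]) (auto simp: comp_def)
  moreover have "(\<integral>\<omega>. indicator A (X \<omega>) \<partial>M) = prob (X -` A \<inter> space M)"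
    using XA by (subst Bochner_Integration.integral_cong[OF refl indicator_eq]) auto
  ultimately show ?thesis by simp
qed

lemma AE_finite_if_nn_integral_count_finite:
  assumes "\<And>k. E k \<in> sets M" "(\<integral>\<^sup>+x. (\<Sum>k. indicator (E k) x) \<partial>M) < \<infinity>"
  shows "AE x in M. finite {k. x \<in> E k}"
proof -
  have "AE x in M. (\<Sum>k. indicator (E k) x) \<noteq> (\<infinity>::ennreal)"
    using assms by (intro nn_integral_PInf_AE) auto
  then show ?thesis
  proof (rule eventually_mono)
    fix x assume "(\<Sum>k. indicator (E k) x) \<noteq> (\<infinity>::ennreal)"
    then have "summable (\<lambda>k. indicator (E k) x :: real)"
      by (intro summable_suminf_not_top) (auto simp: ennreal_indicator)
    then have "eventually (\<lambda>k. indicator (E k) x < (1::real)) sequentially"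
      by (intro order_tendstoD(2)[OF summable_LIMSEQ_zero]) auto
    then obtain N where "\<And>k. N \<le> k \<Longrightarrow> x \<notin> E k"
      unfolding eventually_sequentially by (metis indicator_simps(1) less_irrefl)
    then have "{k. x \<in> E k} \<subseteq> {..<N}" by (auto simp: not_less[symmetric])
    then show "finite {k. x \<in> E k}" by (rule finite_subset) simp
  qed
qed

lemma (in finite_measure) summable_measure_if_nn_integral_count_finite:
  assumes "\<And>k. E k \<in> sets M" "(\<integral>\<^sup>+x. (\<Sum>k. indicator (E k) x) \<partial>M) < \<infinity>"
  shows "summable (\<lambda>k. measure M (E k))"
proof -
  have "(\<integral>\<^sup>+x. (\<Sum>k. indicator (E k) x) \<partial>M) = (\<Sum>k. ennreal (measure M (E k)))"
    using assms(1) by (simp add: nn_integral_suminf emeasure_eq_measure)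
  then show ?thesis using assms(2) by (intro summable_suminf_not_top) auto
qed

lemma step_on_threshold_function:
  fixes s :: "nat \<Rightarrow> real"
  assumes "finite {k. s k \<le> b}" "S \<subseteq> {..b}"
  shows "step_on (\<lambda>t. F (\<lambda>k. s k \<le> t)) S"
  unfolding step_on_def
proof (intro exI conjI allI impI)
  show "finite (s ` {k. s k \<le> b})" using assms(1) by simp
  fix x y assume xy: "x \<in> S" "y \<in> S" "x \<le> y" "{x..y} \<inter> s ` {k. s k \<le> b} = {}"
  have "s k \<le> x \<longleftrightarrow> s k \<le> y" for k
  proof
    assume "s k \<le> y"
    moreover have "y \<le> b" using xy(2) assms(2) by auto
    ultimately have "s k \<in> s ` {k. s k \<le> b}" by simp
    then show "s k \<le> x" using xy(4) \<open>s k \<le> y\<close> by (meson atLeastAtMost_iff disjoint_iff linorder_le_cases)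
  qed (use xy(3) in linarith)
  then show "F (\<lambda>k. s k \<le> x) = F (\<lambda>k. s k \<le> y)" by simp
qed

locale time_changed_martingale =
  fixes P :: "'a measure" and M :: "nat \<Rightarrow> 'a \<Rightarrow> real" and tau :: "nat \<Rightarrow> 'a \<Rightarrow> real"
  assumes prob_space_P: "prob_space P"
    and M_martingale: "martingale_on P (natural_filtration P UNIV M) UNIV M"
    and increments_bounded: "\<exists>C. \<forall>i\<ge>1. (\<integral>\<omega>. \<bar>M i \<omega> - M (i - 1) \<omega>\<bar> \<partial>P) \<le> C"
    and tau_measurable: "\<forall>k\<ge>1. tau k \<in> borel_measurable P"
    and tau_pos_mono: "\<forall>k\<ge>1. \<forall>\<omega>\<in>space P. 0 < tau k \<omega> \<and> tau k \<omega> \<le> tau (Suc k) \<omega>"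
    and tau_indep_M: "prob_space.indep_var P
           (PiM {1..} (\<lambda>_. borel)) (\<lambda>\<omega>. \<lambda>k\<in>{1..}. tau k \<omega>)
           (PiM UNIV (\<lambda>_. borel)) (\<lambda>\<omega> n. M n \<omega>)"
    and jump_count_integrable:
      "\<forall>t\<ge>0. (\<integral>\<^sup>+\<omega>. (\<Sum>k. ennreal (if 1 \<le> k \<and> tau k \<omega> \<le> t then 1 else 0)) \<partial>P) < \<infinity>"
begin

sublocale prob_space P by (rule prob_space_P)

abbreviation "tau_space \<equiv> PiM {1::nat..} (\<lambda>_. borel :: real measure)"
abbreviation "path_space \<equiv> PiM UNIV (\<lambda>_::nat. borel :: real measure)"

definition "F n = natural_filtration P UNIV M n"
definition "tau_seq \<omega> = (\<lambda>k\<in>{1::nat..}. tau k \<omega>)"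
definition "M_path \<omega> = (\<lambda>n. M n \<omega>)"
definition "dM k \<omega> = M (Suc k) \<omega> - M k \<omega>"

lemma sets_F: "sets (F n) = sigma_sets (space P) {M i -` B \<inter> space P | i B. i \<le> n \<and> B \<in> sets borel}"
  unfolding F_def natural_filtration_def by (subst sets_measure_of) auto

lemma space_F [simp]: "space (F n) = space P"
  unfolding F_def natural_filtration_def by (simp add: space_measure_of_conv)

lemma F_subalgebra: "subalgebra P (F n)"
  and M_adapted: "M n \<in> borel_measurable (F n)"
  and M_integrable: "integrable P (M n)"
  and M_cond_exp: "AE \<omega> in P. real_cond_exp P (F n) (M (Suc n)) \<omega> = M n \<omega>"
  using M_martingale unfolding martingale_on_def F_def by auto

lemma M_measurable [measurable]: "M n \<in> borel_measurable P"
  by (rule measurable_from_subalg[OF F_subalgebra M_adapted])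

lemma M_measurable_F: "i \<le> n \<Longrightarrow> M i \<in> borel_measurable (F n)"
  by (rule measurableI) (auto simp: sets_F intro!: sigma_sets.Basic)

lemma tau_Suc_measurable [measurable]: "tau (Suc k) \<in> borel_measurable P"
  using tau_measurable by simp

lemma tau_seq_measurable [measurable]: "tau_seq \<in> measurable P tau_space"
  unfolding tau_seq_def using tau_measurable by (intro measurable_restrict) auto

lemma dM_integrable: "integrable P (dM k)"
  unfolding dM_def using M_integrable by auto

lemma set_integrable_M: "A \<in> events \<Longrightarrow> set_integrable P A (M k)"
  unfolding set_integrable_def by (rule integrable_mult_indicator[OF _ M_integrable])

lemma set_integrable_dM: "A \<in> events \<Longrightarrow> set_integrable P A (dM k)"
  unfolding set_integrable_def by (rule integrable_mult_indicator[OF _ dM_integrable])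

lemma set_integral_dM_F: "D \<in> sets (F k) \<Longrightarrow> (LINT \<omega>:D|P. dM k \<omega>) = 0"
proof -
  assume D: "D \<in> sets (F k)"
  interpret sigma_finite_subalgebra P "F k" by (rule sigma_finite_subalgebraI[OF F_subalgebra])
  have [measurable]: "D \<in> events" using D F_subalgebra by (auto simp: subalgebra_def)
  have "(LINT \<omega>:D|P. M (Suc k) \<omega>) = (LINT \<omega>:D|P. M k \<omega>)"
    by (rule set_integral_eq_if_real_cond_exp_eq[OF M_integrable M_integrable M_cond_exp D])
  then show ?thesis
    unfolding dM_def by (simp add: set_integrable_M)
qed

lemma F_vimage_M_path:
  assumes "D \<in> sets (F k)"
  obtains D' where "D' \<in> sets path_space" "D = M_path -` D' \<inter> space P"
proof -
  let ?V = "vimage_algebra (space P) M_path path_space"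
  have "{M i -` B \<inter> space P | i B. i \<le> k \<and> B \<in> sets borel} \<subseteq> sets ?V"
  proof safe
    fix i and B :: "real set" assume "B \<in> sets borel"
    then have "(\<lambda>x. x i) -` B \<inter> space path_space \<in> sets path_space"
      by (intro measurable_sets[OF measurable_component_singleton]) auto
    then have "M_path -` ((\<lambda>x. x i) -` B \<inter> space path_space) \<inter> space P \<in> sets ?V"
      by (rule in_vimage_algebra)
    then show "M i -` B \<inter> space P \<in> sets ?V" by (simp add: M_path_def vimage_def space_PiM)
  qed
  then have "sigma_sets (space ?V) {M i -` B \<inter> space P | i B. i \<le> k \<and> B \<in> sets borel} \<subseteq> sets ?V"
    by (rule sets.sigma_sets_subset)
  then have "D \<in> sets ?V" using assms by (simp add: sets_F) blast
  moreover have "M_path \<in> space P \<rightarrow> space path_space" by (auto simp: space_PiM)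
  ultimately show ?thesis using that by (auto simp: sets_vimage_algebra2)
qed

lemma integral_indicator_tau_seq_mult_M_path:
  assumes "A \<in> sets tau_space" "g \<in> borel_measurable path_space" "integrable P (\<lambda>\<omega>. g (M_path \<omega>))"
  shows "(\<integral>\<omega>. indicator A (tau_seq \<omega>) * g (M_path \<omega>) \<partial>P) = prob (tau_seq -` A \<inter> space P) * (\<integral>\<omega>. g (M_path \<omega>) \<partial>P)"
  by (rule integral_indicator_mult_indep[OF tau_indep_M[folded tau_seq_def[abs_def] M_path_def[abs_def]]])
    (simp_all only: tau_seq_measurable assms)

definition "info_gen j =
  {tau_seq -` A \<inter> space P \<inter> D | A D. A \<in> sets tau_space \<and> D \<in> sets (F j)}"
definition "info j = sigma (space P) (info_gen j)"

lemma info_gen_events: "info_gen j \<subseteq> events"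
proof (unfold info_gen_def, safe)
  fix A D assume "A \<in> sets tau_space" "D \<in> sets (F j)"
  then show "tau_seq -` A \<inter> space P \<inter> D \<in> events"
    using F_subalgebra by (intro sets.Int measurable_sets[OF tau_seq_measurable]) (auto simp: subalgebra_def)
qed

lemma info_gen_space: "info_gen j \<subseteq> Pow (space P)"
  using info_gen_events sets.sets_into_space by blast

lemma sets_info: "sets (info j) = sigma_sets (space P) (info_gen j)"
  unfolding info_def using info_gen_space by (rule sets_measure_of)

lemma space_info [simp]: "space (info j) = space P"
  unfolding info_def by (simp add: space_measure_of_conv)

lemma info_events: "sets (info j) \<subseteq> events"
  unfolding sets_info using info_gen_events by (rule sets.sigma_sets_subset)

lemma Int_stable_info_gen: "Int_stable (info_gen j)"
  unfolding Int_stable_def info_gen_def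
proof safe
  fix A A' D D' assume "A \<in> sets tau_space" "D \<in> sets (F j)" "A' \<in> sets tau_space" "D' \<in> sets (F j)"
  moreover have "tau_seq -` A \<inter> space P \<inter> D \<inter> (tau_seq -` A' \<inter> space P \<inter> D')
      = tau_seq -` (A \<inter> A') \<inter> space P \<inter> (D \<inter> D')"
    by blast
  ultimately show "\<exists>A'' D''. tau_seq -` A \<inter> space P \<inter> D \<inter> (tau_seq -` A' \<inter> space P \<inter> D')
      = tau_seq -` A'' \<inter> space P \<inter> D'' \<and> A'' \<in> sets tau_space \<and> D'' \<in> sets (F j)"
    by blast
qed

lemma info_gen_memI: "A \<in> sets tau_space \<Longrightarrow> D \<in> sets (F j) \<Longrightarrow> tau_seq -` A \<inter> D \<in> sets (info j)"
  using sets.sets_into_space[of D "F j"]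
  by (auto simp: sets_info info_gen_def intro!: sigma_sets.Basic exI[of _ A] exI[of _ D])

lemma set_integral_dM_info_gen:
  assumes "A \<in> sets tau_space" "D \<in> sets (F k)"
  shows "(LINT \<omega>:(tau_seq -` A \<inter> space P \<inter> D)|P. dM k \<omega>) = 0"
proof -
  obtain D' where D': "D' \<in> sets path_space" "D = M_path -` D' \<inter> space P"
    using F_vimage_M_path[OF assms(2)] .
  define g where "g x = indicator D' x * (x (Suc k) - x k)" for x :: "nat \<Rightarrow> real"
  have g_M_path: "g (M_path \<omega>) = indicator D \<omega> * dM k \<omega>" if "\<omega> \<in> space P" for \<omega>
    using that by (simp add: g_def D'(2) M_path_def dM_def split: split_indicator)
  have D_events: "D \<in> events" using assms(2) F_subalgebra by (auto simp: subalgebra_def)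
  have g_integrable: "integrable P (\<lambda>\<omega>. g (M_path \<omega>))"
    using set_integrable_dM[OF D_events]
    by (subst Bochner_Integration.integrable_cong[OF refl g_M_path]) (auto simp: set_integrable_def)
  have "(LINT \<omega>:(tau_seq -` A \<inter> space P \<inter> D)|P. dM k \<omega>)
      = (\<integral>\<omega>. indicator A (tau_seq \<omega>) * g (M_path \<omega>) \<partial>P)"
    unfolding set_lebesgue_integral_def
    by (intro Bochner_Integration.integral_cong) (auto simp: g_M_path split: split_indicator)
  also have "\<dots> = prob (tau_seq -` A \<inter> space P) * (\<integral>\<omega>. g (M_path \<omega>) \<partial>P)"
    using assms(1) D'(1) g_integrable
    by (intro integral_indicator_tau_seq_mult_M_path) (auto simp: g_def)
  also have "(\<integral>\<omega>. g (M_path \<omega>) \<partial>P) = (LINT \<omega>:D|P. dM k \<omega>)"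
    unfolding set_lebesgue_integral_def
    by (intro Bochner_Integration.integral_cong) (auto simp: g_M_path)
  finally show ?thesis using set_integral_dM_F[OF assms(2)] by simp
qed

lemma set_integral_dM_info:
  assumes "C \<in> sets (info k)"
  shows "(LINT \<omega>:C|P. dM k \<omega>) = 0"
proof (rule set_integral_eq_0_sigma_sets[OF Int_stable_info_gen info_gen_events dM_integrable])
  show "(\<integral>\<omega>. dM k \<omega> \<partial>P) = 0"
    using set_integral_dM_F[OF sets.top] by (simp add: set_integral_space[OF dM_integrable])
  show "C \<in> sigma_sets (space P) (info_gen k)" using assms by (simp add: sets_info)
qed (auto simp: info_gen_def intro: set_integral_dM_info_gen)

lemma F_subset_info: "sets (F j) \<subseteq> sets (info j)"
proof
  fix D assume "D \<in> sets (F j)"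
  moreover have "tau_seq -` space tau_space \<inter> D = D"
    using tau_seq_measurable sets.sets_into_space[OF \<open>D \<in> sets (F j)\<close>] by (auto dest: measurable_space)
  ultimately show "D \<in> sets (info j)" using info_gen_memI[OF sets.top] by metis
qed

lemma M_measurable_info: "i \<le> j \<Longrightarrow> M i \<in> borel_measurable (info j)"
  using M_measurable_F F_subset_info by (intro measurable_from_subalg[of "info j" "F j"]) (auto simp: subalgebra_def)

lemma tau_seq_measurable_info: "tau_seq \<in> measurable (info j) tau_space"
proof (rule measurableI)
  show "tau_seq \<omega> \<in> space tau_space" if "\<omega> \<in> space (info j)" for \<omega>
    using that tau_seq_measurable by (auto dest: measurable_space)
  fix A assume "A \<in> sets tau_space"
  then show "tau_seq -` A \<inter> space (info j) \<in> sets (info j)"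
    using info_gen_memI[OF _ sets.top] by simp
qed

lemma tau_measurable_info: "tau (Suc k) \<in> borel_measurable (info j)"
proof -
  have "(\<lambda>x. x (Suc k)) \<circ> tau_seq \<in> borel_measurable (info j)"
    by (intro measurable_comp[OF tau_seq_measurable_info measurable_component_singleton]) auto
  then show ?thesis by (simp add: comp_def tau_seq_def)
qed

definition "Z t \<omega> = M 0 \<omega> + (\<Sum>k. (M (Suc k) \<omega> - M k \<omega>) * (if tau (Suc k) \<omega> \<le> t then 1 else 0))"
definition "FZ t = natural_filtration P {0..} Z t"
definition "FZ_gen t = {Z r -` B \<inter> space P | r B. r \<in> {0..} \<and> r \<le> t \<and> B \<in> sets borel}"

lemma tau_Suc_mono:
  assumes "\<omega> \<in> space P" "j \<le> k"
  shows "tau (Suc j) \<omega> \<le> tau (Suc k) \<omega>"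
  using assms(2)
proof (induction k rule: dec_induct)
  case (step n)
  have "tau (Suc n) \<omega> \<le> tau (Suc (Suc n)) \<omega>" using tau_pos_mono assms(1) by simp
  then show ?case using step.IH by simp
qed simp

lemma Z_eq_before_jump:
  assumes "\<omega> \<in> space P" "r < tau (Suc j) \<omega>"
  shows "Z r \<omega> = M 0 \<omega> + (\<Sum>k<j. dM k \<omega> * (if tau (Suc k) \<omega> \<le> r then 1 else 0))"
proof -
  have "(\<Sum>k. dM k \<omega> * (if tau (Suc k) \<omega> \<le> r then 1 else 0))
      = (\<Sum>k<j. dM k \<omega> * (if tau (Suc k) \<omega> \<le> r then 1 else 0))"
  proof (rule suminf_finite)
    fix k assume "k \<notin> {..<j}"
    then have "tau (Suc j) \<omega> \<le> tau (Suc k) \<omega>" using assms(1) by (intro tau_Suc_mono) auto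
    then show "dM k \<omega> * (if tau (Suc k) \<omega> \<le> r then 1 else 0) = 0" using assms(2) by auto
  qed simp
  then show ?thesis by (simp add: Z_def dM_def)
qed

lemma Z_measurable [measurable]: "Z t \<in> borel_measurable P"
  unfolding Z_def by measurable

lemma sets_FZ: "sets (FZ s) = sigma_sets (space P) (FZ_gen s)"
  unfolding FZ_def FZ_gen_def natural_filtration_def by (subst sets_measure_of) auto

lemma space_FZ [simp]: "space (FZ s) = space P"
  unfolding FZ_def natural_filtration_def by (simp add: space_measure_of_conv)

lemma FZ_genE:
  assumes "A \<in> FZ_gen t"
  obtains r U where "A = Z r -` U \<inter> space P" "r \<in> {0..}" "r \<le> t" "U \<in> sets borel"
  using assms unfolding FZ_gen_def by blast

lemma FZ_mono: "s \<le> t \<Longrightarrow> sets (FZ s) \<subseteq> sets (FZ t)"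
proof -
  assume "s \<le> t"
  have "FZ_gen s \<subseteq> FZ_gen t"
  proof
    fix A assume "A \<in> FZ_gen s"
    then obtain r U where "A = Z r -` U \<inter> space P" "r \<in> {0..}" "r \<le> s" "U \<in> sets borel"
      by (rule FZ_genE)
    then show "A \<in> FZ_gen t" unfolding FZ_gen_def using \<open>s \<le> t\<close> by force
  qed
  then show ?thesis unfolding sets_FZ by (rule sigma_sets_mono')
qed

lemma Z_measurable_FZ: "0 \<le> t \<Longrightarrow> Z t \<in> borel_measurable (FZ t)"
proof (rule measurableI)
  fix U :: "real set" assume "0 \<le> t" "U \<in> sets borel"
  then have "Z t -` U \<inter> space P \<in> FZ_gen t" unfolding FZ_gen_def by blast
  then show "Z t -` U \<inter> space (FZ t) \<in> sets (FZ t)" by (simp add: sets_FZ)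
qed simp

lemma FZ_events: "sets (FZ s) \<subseteq> events"
proof -
  have "FZ_gen s \<subseteq> events"
  proof
    fix A assume "A \<in> FZ_gen s"
    then obtain r U where "A = Z r -` U \<inter> space P" "U \<in> sets borel" by (rule FZ_genE)
    then show "A \<in> events" by (simp add: measurable_sets[OF Z_measurable])
  qed
  then show ?thesis unfolding sets_FZ by (rule sets.sigma_sets_subset)
qed

lemma FZ_Int_before_jump:
  assumes "B \<in> sets (FZ s)"
  shows "B \<inter> {\<omega>\<in>space P. s < tau (Suc j) \<omega>} \<in> sets (info j)"
proof -
  let ?S = "{\<omega>\<in>space P. s < tau (Suc j) \<omega>}"
  have S_info: "?S \<in> sets (info j)"
    using measurable_sets[OF tau_measurable_info, of "{s<..}" j] by (simp add: vimage_def Int_def conj_commute)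
  have generators: "A \<inter> ?S \<in> sets (info j)" if A: "A \<in> FZ_gen s" for A
  proof -
    obtain r U where rU: "A = Z r -` U \<inter> space P" "r \<in> {0..}" "r \<le> s" "U \<in> sets borel"
      using A by (rule FZ_genE)
    define W where "W \<omega> = M 0 \<omega> + (\<Sum>k<j. dM k \<omega> * (if tau (Suc k) \<omega> \<le> r then 1 else 0))" for \<omega>
    note tau_measurable_info [measurable]
    have "dM k \<in> borel_measurable (info j)" if "k < j" for k
      unfolding dM_def using that by (intro borel_measurable_diff M_measurable_info) auto
    moreover have "(\<lambda>\<omega>. if tau (Suc k) \<omega> \<le> r then 1 else 0 :: real) \<in> borel_measurable (info j)" for k
      by measurable
    ultimately have "W \<in> borel_measurable (info j)"
      unfolding W_def using M_measurable_info[of 0 j]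
      by (intro borel_measurable_add borel_measurable_sum borel_measurable_times) auto
    then have W_pre: "W -` U \<inter> space (info j) \<in> sets (info j)" using rU(4) by (rule measurable_sets)
    have "Z r \<omega> = W \<omega>" if "\<omega> \<in> ?S" for \<omega>
    proof -
      have "\<omega> \<in> space P" "r < tau (Suc j) \<omega>" using that rU(3) by auto
      then show ?thesis unfolding W_def by (rule Z_eq_before_jump)
    qed
    then have A_eq: "A \<inter> ?S = (W -` U \<inter> space (info j)) \<inter> ?S" unfolding rU(1) by auto
    show ?thesis unfolding A_eq by (rule sets.Int[OF W_pre S_info])
  qed
  moreover have "B \<in> sigma_sets (space P) (FZ_gen s)" using assms by (simp add: sets_FZ)
  ultimately show ?thesis by (rule sigma_sets_Int_in_sets[OF S_info, rotated]) blast+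
qed

definition "jumps t k = {\<omega> \<in> space P. 1 \<le> k \<and> tau k \<omega> \<le> t}"

lemma jumps_events [measurable]: "jumps t k \<in> events"
proof (cases k)
  case (Suc j)
  then have "jumps t k = tau (Suc j) -` {..t} \<inter> space P" by (auto simp: jumps_def)
  then show ?thesis by (simp add: measurable_sets[OF tau_Suc_measurable])
qed (simp add: jumps_def)

lemma nn_integral_jump_count_finite:
  assumes "0 \<le> t"
  shows "(\<integral>\<^sup>+\<omega>. (\<Sum>k. indicator (jumps t k) \<omega>) \<partial>P) < \<infinity>"
proof -
  have "(\<Sum>k. indicator (jumps t k) \<omega>) = (\<Sum>k. ennreal (if 1 \<le> k \<and> tau k \<omega> \<le> t then 1 else 0))"
    if "\<omega> \<in> space P" for \<omega>
    using that by (intro arg_cong[where f=suminf] ext) (auto simp: jumps_def)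
  then have "(\<integral>\<^sup>+\<omega>. (\<Sum>k. indicator (jumps t k) \<omega>) \<partial>P)
      = (\<integral>\<^sup>+\<omega>. (\<Sum>k. ennreal (if 1 \<le> k \<and> tau k \<omega> \<le> t then 1 else 0)) \<partial>P)"
    by (rule nn_integral_cong)
  then show ?thesis using jump_count_integrable assms by simp
qed

lemma summable_prob_jumps:
  assumes "0 \<le> t"
  shows "summable (\<lambda>k. prob (jumps t (Suc k)))"
proof -
  have "summable (\<lambda>k. prob (jumps t k))"
    by (rule summable_measure_if_nn_integral_count_finite[OF jumps_events nn_integral_jump_count_finite[OF assms]])
  from summable_ignore_initial_segment[OF this, of 1] show ?thesis by simp
qed

lemma AE_finite_jumps: "AE \<omega> in P. \<forall>t. finite {k. tau (Suc k) \<omega> \<le> t}"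
proof -
  have "AE \<omega> in P. \<forall>n::nat. finite {k. \<omega> \<in> jumps (real n) k}"
    by (subst AE_all_countable)
      (auto intro!: AE_finite_if_nn_integral_count_finite[OF jumps_events] nn_integral_jump_count_finite)
  with AE_space show ?thesis
  proof eventually_elim
    case (elim \<omega>)
    show ?case
    proof
      fix t
      have "{k. tau (Suc k) \<omega> \<le> t} \<subseteq> Suc -` {k. \<omega> \<in> jumps (real (nat \<lceil>t\<rceil>)) k}"
        using elim(1) real_nat_ceiling_ge[of t] by (auto simp: jumps_def)
      moreover have "finite (Suc -` {k. \<omega> \<in> jumps (real (nat \<lceil>t\<rceil>)) k})"
        using elim(2) by (intro finite_vimageI) auto
      ultimately show "finite {k. tau (Suc k) \<omega> \<le> t}" by (rule finite_subset)
    qed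
  qed
qed

lemma dM_abs_integral_bounded:
  obtains C where "\<And>k. (\<integral>\<omega>. \<bar>dM k \<omega>\<bar> \<partial>P) \<le> C"
proof -
  obtain C where "\<forall>i\<ge>1. (\<integral>\<omega>. \<bar>M i \<omega> - M (i - 1) \<omega>\<bar> \<partial>P) \<le> C" using increments_bounded by blast
  then have "(\<integral>\<omega>. \<bar>dM k \<omega>\<bar> \<partial>P) \<le> C" for k by (auto simp: dM_def dest: spec[of _ "Suc k"])
  then show ?thesis by (rule that)
qed

lemma integral_indicator_jumps_abs_dM:
  "(\<integral>\<omega>. indicator (jumps t (Suc k)) \<omega> * \<bar>dM k \<omega>\<bar> \<partial>P) = prob (jumps t (Suc k)) * (\<integral>\<omega>. \<bar>dM k \<omega>\<bar> \<partial>P)"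
proof -
  define A where "A = {x \<in> space tau_space. x (Suc k) \<le> t}"
  have A: "A \<in> sets tau_space"
    unfolding A_def by measurable
  have tau_seq_A: "tau_seq -` A \<inter> space P = jumps t (Suc k)"
    using tau_seq_measurable by (auto simp: A_def jumps_def tau_seq_def dest: measurable_space)
  have M_path_dM: "M_path \<omega> (Suc k) - M_path \<omega> k = dM k \<omega>" for \<omega>
    by (simp add: dM_def M_path_def)
  have "(\<integral>\<omega>. indicator (jumps t (Suc k)) \<omega> * \<bar>dM k \<omega>\<bar> \<partial>P)
      = (\<integral>\<omega>. indicator A (tau_seq \<omega>) * \<bar>M_path \<omega> (Suc k) - M_path \<omega> k\<bar> \<partial>P)"
    using tau_seq_A
    by (intro Bochner_Integration.integral_cong) (auto simp: M_path_dM split: split_indicator)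
  also have "\<dots> = prob (jumps t (Suc k)) * (\<integral>\<omega>. \<bar>dM k \<omega>\<bar> \<partial>P)"
    using A dM_integrable[of k]
    by (subst integral_indicator_tau_seq_mult_M_path) (auto simp: tau_seq_A M_path_dM)
  finally show ?thesis .
qed

lemma integral_norm_jump_term_le:
  assumes "B \<in> events" "\<And>k. (\<integral>\<omega>. \<bar>dM k \<omega>\<bar> \<partial>P) \<le> C"
  shows "(\<integral>\<omega>. norm (indicator (B \<inter> jumps t (Suc k)) \<omega> * dM k \<omega>) \<partial>P) \<le> prob (jumps t (Suc k)) * C"
proof -
  have "(\<integral>\<omega>. norm (indicator (B \<inter> jumps t (Suc k)) \<omega> * dM k \<omega>) \<partial>P)
      \<le> (\<integral>\<omega>. indicator (jumps t (Suc k)) \<omega> * \<bar>dM k \<omega>\<bar> \<partial>P)"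
    using integrable_norm[OF set_integrable_dM[unfolded set_integrable_def]] assms(1)
      integrable_mult_indicator[OF jumps_events integrable_abs[OF dM_integrable], of t "Suc k" k]
    by (intro integral_mono) (auto simp: abs_mult split: split_indicator)
  also have "\<dots> = prob (jumps t (Suc k)) * (\<integral>\<omega>. \<bar>dM k \<omega>\<bar> \<partial>P)"
    by (rule integral_indicator_jumps_abs_dM)
  also have "\<dots> \<le> prob (jumps t (Suc k)) * C"
    by (intro mult_left_mono assms(2)) simp
  finally show ?thesis .
qed

lemma integral_jump_sum:
  assumes "0 \<le> t" "B \<in> events"
  shows "integrable P (\<lambda>\<omega>. \<Sum>k. indicator (B \<inter> jumps t (Suc k)) \<omega> * dM k \<omega>)"
    and "(\<integral>\<omega>. (\<Sum>k. indicator (B \<inter> jumps t (Suc k)) \<omega> * dM k \<omega>) \<partial>P)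
      = (\<Sum>k. LINT \<omega>:(B \<inter> jumps t (Suc k))|P. dM k \<omega>)"
proof -
  define f where "f = (\<lambda>k \<omega>. indicator (B \<inter> jumps t (Suc k)) \<omega> * dM k \<omega>)"
  have f_integrable: "integrable P (f k)" for k
    using set_integrable_dM[of "B \<inter> jumps t (Suc k)" k] assms(2)
    by (auto simp: f_def set_integrable_def)
  have AE_summable: "AE \<omega> in P. summable (\<lambda>k. norm (f k \<omega>))"
    using AE_finite_jumps
  proof eventually_elim
    case (elim \<omega>)
    then show ?case by (intro summable_finite[of "{k. tau (Suc k) \<omega> \<le> t}"]) (auto simp: f_def jumps_def)
  qed
  obtain C where "\<And>k. (\<integral>\<omega>. \<bar>dM k \<omega>\<bar> \<partial>P) \<le> C"
    using dM_abs_integral_bounded by blast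
  then have "(\<integral>\<omega>. norm (f k \<omega>) \<partial>P) \<le> prob (jumps t (Suc k)) * C" for k
    unfolding f_def using assms(2) by (intro integral_norm_jump_term_le)
  then have summable_integrals: "summable (\<lambda>k. \<integral>\<omega>. norm (f k \<omega>) \<partial>P)"
    by (intro summable_comparison_test[OF _ summable_mult2[OF summable_prob_jumps[OF assms(1)]]]) auto
  show "integrable P (\<lambda>\<omega>. \<Sum>k. indicator (B \<inter> jumps t (Suc k)) \<omega> * dM k \<omega>)"
    and "(\<integral>\<omega>. (\<Sum>k. indicator (B \<inter> jumps t (Suc k)) \<omega> * dM k \<omega>) \<partial>P)
      = (\<Sum>k. LINT \<omega>:(B \<inter> jumps t (Suc k))|P. dM k \<omega>)"
    using integrable_suminf[OF f_integrable AE_summable summable_integrals]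
      integral_suminf[OF f_integrable AE_summable summable_integrals]
    by (simp_all add: f_def set_lebesgue_integral_def)
qed

lemma indicator_mult_Z:
  assumes "\<omega> \<in> space P"
  shows "indicator B \<omega> * Z t \<omega>
    = indicator B \<omega> * M 0 \<omega> + (\<Sum>k. indicator (B \<inter> jumps t (Suc k)) \<omega> * dM k \<omega>)"
proof (cases "\<omega> \<in> B")
  case True
  then have "(\<lambda>k. indicator (B \<inter> jumps t (Suc k)) \<omega> * dM k \<omega>)
      = (\<lambda>k. (M (Suc k) \<omega> - M k \<omega>) * (if tau (Suc k) \<omega> \<le> t then 1 else 0))"
    using assms by (auto simp: jumps_def dM_def)
  then show ?thesis using True by (simp add: Z_def)
qed simp

lemma set_integral_Z:
  assumes "0 \<le> t" "B \<in> events"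
  shows "set_integrable P B (Z t)"
    and "(LINT \<omega>:B|P. Z t \<omega>) = (LINT \<omega>:B|P. M 0 \<omega>) + (\<Sum>k. LINT \<omega>:(B \<inter> jumps t (Suc k))|P. dM k \<omega>)"
proof -
  have M0: "integrable P (\<lambda>\<omega>. indicator B \<omega> * M 0 \<omega>)"
    using set_integrable_M[OF assms(2)] by (simp add: set_integrable_def)
  show "set_integrable P B (Z t)"
    unfolding set_integrable_def
    using Bochner_Integration.integrable_add[OF M0 integral_jump_sum(1)[OF assms]]
    by (simp add: Bochner_Integration.integrable_cong[OF refl indicator_mult_Z])
  have "(LINT \<omega>:B|P. Z t \<omega>)
      = (\<integral>\<omega>. indicator B \<omega> * M 0 \<omega> + (\<Sum>k. indicator (B \<inter> jumps t (Suc k)) \<omega> * dM k \<omega>) \<partial>P)"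
    unfolding set_lebesgue_integral_def
    by (simp add: Bochner_Integration.integral_cong[OF refl indicator_mult_Z])
  also have "\<dots> = (LINT \<omega>:B|P. M 0 \<omega>) + (\<Sum>k. LINT \<omega>:(B \<inter> jumps t (Suc k))|P. dM k \<omega>)"
    using integral_jump_sum[OF assms] M0
    by (simp add: Bochner_Integration.integral_add set_lebesgue_integral_def)
  finally show "(LINT \<omega>:B|P. Z t \<omega>) = (LINT \<omega>:B|P. M 0 \<omega>) + (\<Sum>k. LINT \<omega>:(B \<inter> jumps t (Suc k))|P. dM k \<omega>)" .
qed

lemma Z_integrable: "0 \<le> t \<Longrightarrow> integrable P (Z t)"
  using set_integral_Z(1)[OF _ sets.top, of t] unfolding set_integrable_def
  by (subst (asm) Bochner_Integration.integrable_cong[OF refl, where g="Z t"]) auto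

lemma set_integral_Z_eq:
  assumes "0 \<le> s" "s \<le> t" "B \<in> sets (FZ s)"
  shows "(LINT \<omega>:B|P. Z t \<omega>) = (LINT \<omega>:B|P. Z s \<omega>)"
proof -
  have B: "B \<in> events" using assms(3) FZ_events by blast
  have increments_eq:
    "(LINT \<omega>:(B \<inter> jumps t (Suc k))|P. dM k \<omega>) = (LINT \<omega>:(B \<inter> jumps s (Suc k))|P. dM k \<omega>)" for k
  proof -
    define C where "C = B \<inter> {\<omega>\<in>space P. s < tau (Suc k) \<omega>} \<inter> (tau (Suc k) -` {..t} \<inter> space (info k))"
    have C_info: "C \<in> sets (info k)"
      unfolding C_def using assms(3)
      by (intro sets.Int FZ_Int_before_jump measurable_sets[OF tau_measurable_info]) auto
    then have C_events: "C \<in> events" using info_events by blast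
    have "B \<inter> jumps t (Suc k) = (B \<inter> jumps s (Suc k)) \<union> C" "(B \<inter> jumps s (Suc k)) \<inter> C = {}"
      using assms(2) B sets.sets_into_space by (auto simp: C_def jumps_def)
    then have "(LINT \<omega>:(B \<inter> jumps t (Suc k))|P. dM k \<omega>)
        = (LINT \<omega>:(B \<inter> jumps s (Suc k))|P. dM k \<omega>) + (LINT \<omega>:C|P. dM k \<omega>)"
      using B C_events by (simp add: set_integral_Un set_integrable_dM)
    then show ?thesis using set_integral_dM_info[OF C_info] by simp
  qed
  have "(LINT \<omega>:B|P. Z t \<omega>)
      = (LINT \<omega>:B|P. M 0 \<omega>) + (\<Sum>k. LINT \<omega>:(B \<inter> jumps t (Suc k))|P. dM k \<omega>)"
    using assms(1,2) by (intro set_integral_Z(2)[OF _ B]) linarith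
  also have "\<dots> = (LINT \<omega>:B|P. M 0 \<omega>) + (\<Sum>k. LINT \<omega>:(B \<inter> jumps s (Suc k))|P. dM k \<omega>)"
    unfolding increments_eq ..
  also have "\<dots> = (LINT \<omega>:B|P. Z s \<omega>)"
    by (rule set_integral_Z(2)[OF assms(1) B, symmetric])
  finally show ?thesis .
qed

lemma Z_martingale: "martingale_on P (natural_filtration P {0..} Z) {0..} Z"
  unfolding martingale_on_def FZ_def[symmetric, abs_def]
proof (intro conjI ballI impI)
  fix t :: real assume t: "t \<in> {0..}"
  show "subalgebra P (FZ t)" using FZ_events by (simp add: subalgebra_def)
  show "Z t \<in> borel_measurable (FZ t)"
    using t by (simp add: Z_measurable_FZ)
  show "integrable P (Z t)" using t by (simp add: Z_integrable)
next
  fix s t :: real assume st: "s \<in> {0..}" "t \<in> {0..}" "s \<le> t"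
  then show "sets (FZ s) \<subseteq> sets (FZ t)"
    by (intro FZ_mono)
  interpret sigma_finite_subalgebra P "FZ s"
    using FZ_events by (intro sigma_finite_subalgebraI) (simp add: subalgebra_def)
  show "AE \<omega> in P. real_cond_exp P (FZ s) (Z t) \<omega> = Z s \<omega>"
  proof (rule real_cond_exp_charact)
    show "(LINT \<omega>:A|P. Z t \<omega>) = (LINT \<omega>:A|P. Z s \<omega>)" if "A \<in> sets (FZ s)" for A
      using that st by (intro set_integral_Z_eq) auto
    show "integrable P (Z t)" "integrable P (Z s)" using st by (simp_all add: Z_integrable)
    show "Z s \<in> borel_measurable (FZ s)"
      using st by (simp add: Z_measurable_FZ)
  qed
qed

lemma Z_AE_step: "AE \<omega> in P. \<forall>b\<ge>0. step_on (\<lambda>t. Z t \<omega>) {0..b}"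
  using AE_finite_jumps
proof eventually_elim
  case (elim \<omega>)
  let ?F = "\<lambda>J. M 0 \<omega> + (\<Sum>k. (M (Suc k) \<omega> - M k \<omega>) * (if J k then 1 else 0))"
  have "step_on (\<lambda>t. Z t \<omega>) {0..b}" for b
    unfolding Z_def by (rule step_on_threshold_function[where F="?F", OF elim[rule_format]]) auto
  then show ?case by (intro allI impI)
qed

end

theorem mainTheorem1:
  fixes P :: "'a measure" and M :: "nat \<Rightarrow> 'a \<Rightarrow> real" and tau :: "nat \<Rightarrow> 'a \<Rightarrow> real"
  assumes "prob_space P"
    and "martingale_on P (natural_filtration P UNIV M) UNIV M"
    and "\<exists>C. \<forall>i\<ge>1. (\<integral>\<omega>. \<bar>M i \<omega> - M (i - 1) \<omega>\<bar> \<partial>P) \<le> C"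
    and "\<forall>k\<ge>1. tau k \<in> borel_measurable P"
    and "\<forall>k\<ge>1. \<forall>\<omega>\<in>space P. 0 < tau k \<omega> \<and> tau k \<omega> \<le> tau (Suc k) \<omega>"
    and "prob_space.indep_var P
           (PiM {1..} (\<lambda>_. borel)) (\<lambda>\<omega>. \<lambda>k\<in>{1..}. tau k \<omega>)
           (PiM UNIV (\<lambda>_. borel)) (\<lambda>\<omega> n. M n \<omega>)"
    and "\<forall>t\<ge>0. (\<integral>\<^sup>+\<omega>. (\<Sum>k. ennreal (if 1 \<le> k \<and> tau k \<omega> \<le> t then 1 else 0)) \<partial>P) < \<infinity>"
  shows "step_martingale P
           (\<lambda>t \<omega>. M 0 \<omega> + (\<Sum>k. (M (Suc k) \<omega> - M k \<omega>) * (if tau (Suc k) \<omega> \<le> t then 1 else 0)))"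
proof -
  interpret time_changed_martingale P M tau
    using assms by (simp add: time_changed_martingale_def)
  show ?thesis
    using Z_martingale Z_AE_step unfolding step_martingale_def Z_def[abs_def] by blast
qed

end
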